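(* Let $(X,Y)$ be a random pair in $\mathbb{R}^d\times\mathbb{R}$ with law $\rho$ such that $\|X\|^2\le K$ almost surely, and let $\Sigma=\mathbb{E}[XX^\top]$ and $L(\theta)=\frac12\mathbb{E}[(\langle\theta,X\rangle-Y)^2]$. For $\theta\in\mathbb{R}^d$ let $r_X(\theta)=\langle\theta,X\rangle-Y$ and $$\sigma(\theta)=\Big(\mathbb{E}[r_X(\theta)^2XX^\top]-\mathbb{E}[r_X(\theta)X]\,\mathbb{E}[r_X(\theta)X]^\top\Big)^{1/2}$$ (positive semidefinite square root). Assume there exists $a>0$ such that for all $\theta\in\mathbb{R}^d$, $\sigma(\theta)^2\succcurlyeq a^2L(\theta)I_d$ and $L(\theta)\ge a^2$. Then there exists a constant $c>0$ depending only on $\rho$ such that for all $\theta,\eta\in\mathbb{R}^d$, $$\|\sigma(\theta)-\sigma(\eta)\|_{\mathrm{HS}}^2\le 2cK\,\langle\Sigma(\theta-\eta),\theta-\eta\rangle.$$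
   Context: $\|\cdot\|_{\mathrm{HS}}$ is the Hilbert–Schmidt (Frobenius) norm; $\succcurlyeq$ is the Loewner order on symmetric matrices. *)

theory Defs
  imports "HOL-Probability.Probability"
begin

definition psd_mat :: "real^'n^'n \<Rightarrow> bool" where
  "psd_mat A \<longleftrightarrow> transpose A = A \<and> (\<forall>x::real^'n. 0 \<le> x \<bullet> (A *v x))"

definition loewner_ge :: "real^'n^'n \<Rightarrow> real^'n^'n \<Rightarrow> bool" where
  "loewner_ge A B \<longleftrightarrow> psd_mat (A - B)"

definition psd_sqrt :: "real^'n^'n \<Rightarrow> real^'n^'n" where
  "psd_sqrt A = (THE S. psd_mat S \<and> S ** S = A)"

definition hs_norm :: "real^'n^'n \<Rightarrow> real" where
  "hs_norm A = sqrt (\<Sum>i\<in>UNIV. \<Sum>j\<in>UNIV. (A $ i $ j)\<^sup>2)"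

text \<open>Data: law rho on pairs (X,Y); X = fst, Y = snd.\<close>
definition resid :: "real^'n \<Rightarrow> (real^'n) \<times> real \<Rightarrow> real" where
  "resid \<theta> z = \<theta> \<bullet> fst z - snd z"

definition risk :: "((real^'n) \<times> real) measure \<Rightarrow> real^'n \<Rightarrow> real" where
  "risk \<rho> \<theta> = (1/2) * (\<integral>z. (resid \<theta> z)\<^sup>2 \<partial>\<rho>)"

definition second_moment :: "((real^'n) \<times> real) measure \<Rightarrow> real^'n^'n" where
  "second_moment \<rho> = (\<chi> i j. \<integral>z. fst z $ i * fst z $ j \<partial>\<rho>)"

definition noise_cov :: "((real^'n) \<times> real) measure \<Rightarrow> real^'n \<Rightarrow> real^'n^'n" where
  "noise_cov \<rho> \<theta> =
     (\<chi> i j. (\<integral>z. (resid \<theta> z)\<^sup>2 * fst z $ i * fst z $ j \<partial>\<rho>)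
            - (\<integral>z. resid \<theta> z * fst z $ i \<partial>\<rho>) * (\<integral>z. resid \<theta> z * fst z $ j \<partial>\<rho>))"

definition sigma_mat :: "((real^'n) \<times> real) measure \<Rightarrow> real^'n \<Rightarrow> real^'n^'n" where
  "sigma_mat \<rho> \<theta> = psd_sqrt (noise_cov \<rho> \<theta>)"

end

theory Submission
  imports Defs
begin

(* The noise covariance C(theta) = sigma(theta)^2 depends Lipschitz-continuously on theta for the
   seminorm |v|_Sigma = sqrt <Sigma v, v>: since r_theta - r_eta = <theta - eta, X> and ||X||^2 <= K,
   Cauchy-Schwarz gives
     <W, C(theta) - C(eta)> <= 2 sqrt 2 K ||W|| |theta - eta|_Sigma (sqrt L(theta) + sqrt L(eta)).
   The square root inherits this because sigma^2 >= a^2 L I forces sigma >= a sqrt L I (spectral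
   theorem), and for symmetric S >= s I, T >= t I one has (s + t) ||S - T||^2 <= <S - T, S^2 - T^2>.
   Taking W = sigma(theta) - sigma(eta), the factor sqrt L(theta) + sqrt L(eta) cancels and
   a ||W|| <= 2 sqrt 2 K |theta - eta|_Sigma, which is the claim with c = 4 K / a^2. *)

lemma quadratic_nonneg_imp_discrim_le:
  fixes a b c :: real
  assumes nonneg: "\<And>t. 0 \<le> a * t\<^sup>2 + b * t + c"
  shows "b\<^sup>2 \<le> 4 * a * c"
proof (cases "a > 0")
  case True
  have "0 \<le> a * (- b / (2 * a))\<^sup>2 + b * (- b / (2 * a)) + c" by (rule nonneg)
  also have "\<dots> = (4 * a * c - b\<^sup>2) / (4 * a)"
    using True by (simp add: field_simps power2_eq_square)
  finally show ?thesis using True by (simp add: zero_le_divide_iff)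
next
  case False
  have b: "b = 0"
  proof (rule ccontr)
    assume "b \<noteq> 0"
    define t where "t = - (\<bar>c\<bar> + 1) / b"
    have "a * t\<^sup>2 \<le> 0" using False by (simp add: mult_nonpos_nonneg)
    moreover have "b * t + c < 0" using \<open>b \<noteq> 0\<close> unfolding t_def by simp
    ultimately show False using nonneg[of t] by linarith
  qed
  have "a = 0"
  proof (rule ccontr)
    assume "a \<noteq> 0"
    with False have a: "a < 0" by simp
    have c: "0 \<le> c" using nonneg[of 0] by simp
    have "0 < (c + 1) / - a" using a c by (intro divide_pos_pos) auto
    then have "(sqrt ((c + 1) / - a))\<^sup>2 = (c + 1) / - a" by simp
    then have "a * (sqrt ((c + 1) / - a))\<^sup>2 = - (c + 1)" using a by simp
    then show False using nonneg[of "sqrt ((c + 1) / - a)"] b by simp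
  qed
  with b show ?thesis by simp
qed

section \<open>Spectral theorem for real symmetric matrices\<close>

lemma symmetric_matrix_inner_commute:
  fixes A :: "real^'n^'n"
  assumes "transpose A = A"
  shows "x \<bullet> (A *v y) = (A *v x) \<bullet> y"
  by (metis assms dot_lmul_matrix inner_commute transpose_transpose vector_transpose_matrix)

lemma symmetric_quadratic_form_add_scaled:
  fixes A :: "real^'n^'n"
  assumes "transpose A = A"
  shows "(x + t *\<^sub>R y) \<bullet> (A *v (x + t *\<^sub>R y))
           = x \<bullet> (A *v x) + 2 * t * (y \<bullet> (A *v x)) + t\<^sup>2 * (y \<bullet> (A *v y))"
proof -
  have "x \<bullet> (A *v y) = y \<bullet> (A *v x)"
    using symmetric_matrix_inner_commute[OF assms] by (simp add: inner_commute)
  then show ?thesis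
    by (simp add: matrix_vector_right_distrib inner_add_left inner_add_right algebra_simps
        power2_eq_square scaleR_matrix_vector_assoc[symmetric] matrix_vector_mult_scaleR)
qed

lemma norm_add_scaled_square:
  "(norm (x + t *\<^sub>R y))\<^sup>2 = (norm x)\<^sup>2 + 2 * t * (x \<bullet> y) + t\<^sup>2 * (norm y)\<^sup>2"
  unfolding power2_norm_eq_inner
  by (simp add: inner_add_left inner_add_right inner_commute algebra_simps power2_eq_square)

lemma rayleigh_maximizer_is_eigenvector:
  fixes A :: "real^'n^'n"
  assumes sym: "transpose A = A" and V: "subspace V" and invariant: "\<forall>y\<in>V. A *v y \<in> V"
    and x: "x \<in> V" "norm x = 1"
    and max: "\<forall>y\<in>V. norm y = 1 \<longrightarrow> y \<bullet> (A *v y) \<le> x \<bullet> (A *v x)"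
  shows "A *v x = (x \<bullet> (A *v x)) *\<^sub>R x"
proof -
  define l where "l = x \<bullet> (A *v x)"
  have homogeneous_max: "z \<bullet> (A *v z) \<le> l * (norm z)\<^sup>2" if z: "z \<in> V" for z
  proof (cases "z = 0")
    case False
    have "z /\<^sub>R norm z \<in> V" "norm (z /\<^sub>R norm z) = 1" using z V False by (simp_all add: subspace_scale)
    then have "(z /\<^sub>R norm z) \<bullet> (A *v (z /\<^sub>R norm z)) \<le> l" using max unfolding l_def by blast
    moreover have "(z /\<^sub>R norm z) \<bullet> (A *v (z /\<^sub>R norm z)) = (z \<bullet> (A *v z)) / (norm z)\<^sup>2"
      by (simp add: scaleR_matrix_vector_assoc[symmetric] matrix_vector_mult_scaleR power2_eq_square divide_inverse)
    ultimately show ?thesis using False by (simp add: divide_le_eq)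
  qed simp
  have orthogonal: "y \<bullet> (A *v x) = l * (x \<bullet> y)" if y: "y \<in> V" for y
  proof -
    have "0 \<le> (l * (norm y)\<^sup>2 - y \<bullet> (A *v y)) * t\<^sup>2 + (2 * (l * (x \<bullet> y) - y \<bullet> (A *v x))) * t + 0"
      for t
      using homogeneous_max[of "x + t *\<^sub>R y"] V x y
      unfolding symmetric_quadratic_form_add_scaled[OF sym] norm_add_scaled_square
      by (simp add: subspace_add subspace_scale l_def algebra_simps)
    from quadratic_nonneg_imp_discrim_le[OF this] show ?thesis by simp
  qed
  define w where "w = A *v x - l *\<^sub>R x"
  have "w \<in> V" unfolding w_def using V x invariant by (simp add: subspace_diff subspace_scale)
  moreover have "w \<bullet> w = w \<bullet> (A *v x) - l * (x \<bullet> w)"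
    unfolding w_def by (simp add: inner_diff_left inner_diff_right inner_commute algebra_simps)
  ultimately have "w \<bullet> w = 0" using orthogonal by simp
  then show ?thesis unfolding w_def l_def by simp
qed

definition orthonormal_basis :: "(real^'n) set \<Rightarrow> bool" where
  "orthonormal_basis B \<longleftrightarrow> finite B \<and> (\<forall>b\<in>B. norm b = 1) \<and> pairwise orthogonal B
     \<and> (\<forall>x. (\<Sum>b\<in>B. (b \<bullet> x) *\<^sub>R b) = x)"

(* The maximiser x of the Rayleigh quotient on the unit sphere of V is an eigenvector, and
   {y \<in> V. x \<bullet> y = 0} is again invariant and of smaller dimension. *)
lemma invariant_subspace_orthonormal_eigenbasis:
  fixes A :: "real^'n^'n"
  assumes sym: "transpose A = A"
  shows "subspace V \<Longrightarrow> \<forall>y\<in>V. A *v y \<in> V \<Longrightarrow>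
    \<exists>B. finite B \<and> B \<subseteq> V \<and> (\<forall>b\<in>B. norm b = 1 \<and> A *v b = (b \<bullet> (A *v b)) *\<^sub>R b)
      \<and> pairwise orthogonal B \<and> (\<forall>y\<in>V. (\<Sum>b\<in>B. (b \<bullet> y) *\<^sub>R b) = y)"
proof (induction "dim V" arbitrary: V rule: less_induct)
  case less
  note V = less.prems(1) and invariant = less.prems(2)
  show ?case
  proof (cases "V \<subseteq> {0}")
    case True
    then show ?thesis by (intro exI[of _ "{}"]) auto
  next
    case False
    then obtain y0 where y0: "y0 \<in> V" "y0 \<noteq> 0" by auto
    define S where "S = V \<inter> sphere 0 1"
    have "compact S" unfolding S_def using V
      by (metis closed_Int_compact closed_subspace compact_sphere)
    moreover have "y0 /\<^sub>R norm y0 \<in> S" unfolding S_def using y0 V by (simp add: subspace_scale)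
    then have "S \<noteq> {}" by blast
    moreover have "continuous_on S (\<lambda>y. y \<bullet> (A *v y))"
      by (intro continuous_on_inner continuous_on_id linear_continuous_on
          matrix_vector_mul_bounded_linear)
    ultimately obtain x where "x \<in> S" and max: "\<forall>y\<in>S. y \<bullet> (A *v y) \<le> x \<bullet> (A *v x)"
      using continuous_attains_sup by blast
    then have x: "x \<in> V" "norm x = 1" unfolding S_def by auto
    have eigen: "A *v x = (x \<bullet> (A *v x)) *\<^sub>R x"
      by (rule rayleigh_maximizer_is_eigenvector[OF sym V invariant x]) (use max in \<open>auto simp: S_def\<close>)
    define W where "W = {y \<in> V. x \<bullet> y = 0}"
    have W: "subspace W" unfolding W_def subspace_def using V
      by (auto simp: subspace_add subspace_scale subspace_0 inner_add_right)
    have invariant_W: "\<forall>y\<in>W. A *v y \<in> W"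
    proof
      fix y assume y: "y \<in> W"
      have "x \<bullet> (A *v y) = (A *v x) \<bullet> y" by (rule symmetric_matrix_inner_commute[OF sym])
      also have "\<dots> = 0" using y unfolding W_def by (subst eigen) simp
      finally show "A *v y \<in> W" using y invariant unfolding W_def by auto
    qed
    have xx: "x \<bullet> x = 1" using x(2) by (simp add: power2_norm_eq_inner[symmetric])
    have "W \<subseteq> V" "x \<in> V - W" using x xx unfolding W_def by auto
    then have "W \<subset> V" by blast
    then have "dim W < dim V" using dim_psubset span_eq_iff V W by metis
    from less.hyps[OF this W invariant_W] obtain B where
      B: "finite B" "B \<subseteq> W" "\<forall>b\<in>B. norm b = 1 \<and> A *v b = (b \<bullet> (A *v b)) *\<^sub>R b"
         "pairwise orthogonal B" "\<forall>y\<in>W. (\<Sum>b\<in>B. (b \<bullet> y) *\<^sub>R b) = y"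
      by blast
    have "x \<notin> B" using B(2) xx unfolding W_def by auto
    have orthogonal_x: "b \<bullet> x = 0" if "b \<in> B" for b
      using B(2) that unfolding W_def by (auto simp: inner_commute)
    show ?thesis
    proof (intro exI[of _ "insert x B"] conjI)
      show "finite (insert x B)" "insert x B \<subseteq> V"
        using B(1,2) x unfolding W_def by auto
      show "\<forall>b\<in>insert x B. norm b = 1 \<and> A *v b = (b \<bullet> (A *v b)) *\<^sub>R b"
        using B(3) x eigen by auto
      show "pairwise orthogonal (insert x B)"
        using B(4) orthogonal_x by (auto simp: pairwise_insert orthogonal_def inner_commute)
      show "\<forall>y\<in>V. (\<Sum>b\<in>insert x B. (b \<bullet> y) *\<^sub>R b) = y"
      proof
        fix y assume "y \<in> V"
        define w where "w = y - (x \<bullet> y) *\<^sub>R x"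
        have "w \<in> W" unfolding W_def w_def using \<open>y \<in> V\<close> x V xx
          by (simp add: subspace_diff subspace_scale inner_diff_right)
        then have "w = (\<Sum>b\<in>B. (b \<bullet> w) *\<^sub>R b)" using B(5) by simp
        also have "\<dots> = (\<Sum>b\<in>B. (b \<bullet> y) *\<^sub>R b)"
          by (rule sum.cong) (auto simp: w_def inner_diff_right orthogonal_x)
        finally show "(\<Sum>b\<in>insert x B. (b \<bullet> y) *\<^sub>R b) = y"
          using B(1) \<open>x \<notin> B\<close> unfolding w_def by (simp add: algebra_simps)
      qed
    qed
  qed
qed

lemma symmetric_matrix_orthonormal_eigenbasis:
  fixes A :: "real^'n^'n"
  assumes "transpose A = A"
  obtains B where "orthonormal_basis B" "\<And>b. b \<in> B \<Longrightarrow> A *v b = (b \<bullet> (A *v b)) *\<^sub>R b"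
  using invariant_subspace_orthonormal_eigenbasis[OF assms, of UNIV]
  unfolding orthonormal_basis_def by auto

lemma orthonormal_basis_sum_inner_scaleR:
  assumes "orthonormal_basis B" "b \<in> B"
  shows "(\<Sum>c\<in>B. (g c * (c \<bullet> b)) *\<^sub>R c) = g b *\<^sub>R b"
proof -
  have "(\<Sum>c\<in>B. (g c * (c \<bullet> b)) *\<^sub>R c)
      = (g b * (b \<bullet> b)) *\<^sub>R b + (\<Sum>c\<in>B - {b}. (g c * (c \<bullet> b)) *\<^sub>R c)"
    using assms by (simp add: orthonormal_basis_def sum.remove)
  also have "(\<Sum>c\<in>B - {b}. (g c * (c \<bullet> b)) *\<^sub>R c) = 0"
    using assms by (intro sum.neutral) (auto simp: orthonormal_basis_def pairwise_def orthogonal_def)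
  also have "b \<bullet> b = 1"
    using assms by (simp add: orthonormal_basis_def power2_norm_eq_inner[symmetric])
  finally show ?thesis by simp
qed

lemma orthonormal_basis_parseval:
  assumes "orthonormal_basis B"
  shows "x \<bullet> x = (\<Sum>b\<in>B. (b \<bullet> x)\<^sup>2)"
proof -
  have "x \<bullet> x = x \<bullet> (\<Sum>b\<in>B. (b \<bullet> x) *\<^sub>R b)" using assms unfolding orthonormal_basis_def by metis
  also have "\<dots> = (\<Sum>b\<in>B. (b \<bullet> x)\<^sup>2)" by (simp add: inner_sum_right power2_eq_square inner_commute)
  finally show ?thesis .
qed

lemma eigenbasis_matrix_vector:
  fixes A :: "real^'n^'n"
  assumes B: "orthonormal_basis B" and eigen: "\<And>b. b \<in> B \<Longrightarrow> A *v b = lam b *\<^sub>R b"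
  shows "A *v x = (\<Sum>b\<in>B. (lam b * (b \<bullet> x)) *\<^sub>R b)"
proof -
  have "A *v x = A *v (\<Sum>b\<in>B. (b \<bullet> x) *\<^sub>R b)" using B unfolding orthonormal_basis_def by metis
  also have "\<dots> = (\<Sum>b\<in>B. (b \<bullet> x) *\<^sub>R (A *v b))" by (simp add: vec.sum matrix_vector_mult_scaleR)
  also have "\<dots> = (\<Sum>b\<in>B. (lam b * (b \<bullet> x)) *\<^sub>R b)" using eigen by (intro sum.cong) (auto simp: mult.commute)
  finally show ?thesis .
qed

lemma eigenbasis_quadratic_form:
  fixes A :: "real^'n^'n"
  assumes "orthonormal_basis B" and "\<And>b. b \<in> B \<Longrightarrow> A *v b = lam b *\<^sub>R b"
  shows "x \<bullet> (A *v x) = (\<Sum>b\<in>B. lam b * (b \<bullet> x)\<^sup>2)"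
proof -
  have "x \<bullet> (A *v x) = x \<bullet> (\<Sum>b\<in>B. (lam b * (b \<bullet> x)) *\<^sub>R b)"
    using eigenbasis_matrix_vector[OF assms] by simp
  then show ?thesis by (simp add: inner_sum_right power2_eq_square inner_commute mult.assoc)
qed

section \<open>Positive semidefinite square roots\<close>

definition outer :: "real^'m \<Rightarrow> real^'n \<Rightarrow> real^'n^'m" where
  "outer x y = (\<chi> i j. x $ i * y $ j)"

lemma outer_matrix_vector: "outer x y *v v = (y \<bullet> v) *\<^sub>R x"
  by (simp add: outer_def matrix_vector_mult_def inner_vec_def vec_eq_iff sum_distrib_left mult_ac)

lemma inner_outer: "A \<bullet> outer x y = x \<bullet> (A *v y)"
  by (simp add: outer_def inner_vec_def matrix_vector_mult_def sum_distrib_left mult_ac)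

lemma norm_outer: "norm (outer x y) = norm x * norm y"
proof -
  have "outer x y \<bullet> outer x y = (x \<bullet> x) * (y \<bullet> y)"
    by (simp add: outer_def inner_vec_def sum_product mult_ac) (rule sum.swap)
  then show ?thesis by (simp add: norm_eq_sqrt_inner real_sqrt_mult)
qed

lemma sum_matrix_vector_mult: "sum M B *v x = (\<Sum>b\<in>B. M b *v x)"
  by (induction B rule: infinite_finite_induct) (simp_all add: matrix_vector_mult_add_rdistrib)

lemma psd_mat_kernel:
  fixes P :: "real^'n^'n"
  assumes P: "psd_mat P" and x: "x \<bullet> (P *v x) = 0"
  shows "P *v x = 0"
proof -
  have sym: "transpose P = P" using P unfolding psd_mat_def by simp
  have "y \<bullet> (P *v x) = 0" for y
  proof -
    have "0 \<le> (y \<bullet> (P *v y)) * t\<^sup>2 + (2 * (y \<bullet> (P *v x))) * t + 0" for t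
    proof -
      have "0 \<le> (x + t *\<^sub>R y) \<bullet> (P *v (x + t *\<^sub>R y))" using P unfolding psd_mat_def by blast
      then show ?thesis unfolding symmetric_quadratic_form_add_scaled[OF sym] x by (simp add: algebra_simps)
    qed
    from quadratic_nonneg_imp_discrim_le[OF this] show ?thesis by simp
  qed
  from this[of "P *v x"] show ?thesis by simp
qed

lemma psd_sqrt_exists:
  fixes A :: "real^'n^'n"
  assumes A: "psd_mat A"
  shows "\<exists>S. psd_mat S \<and> S ** S = A"
proof -
  obtain B where B: "orthonormal_basis B" and eigen: "\<And>b. b \<in> B \<Longrightarrow> A *v b = (b \<bullet> (A *v b)) *\<^sub>R b"
    using symmetric_matrix_orthonormal_eigenbasis A unfolding psd_mat_def by blast
  define lam where "lam b = b \<bullet> (A *v b)" for b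
  have lam_nonneg: "lam b \<ge> 0" for b using A unfolding lam_def psd_mat_def by blast
  have eigen': "A *v b = lam b *\<^sub>R b" if "b \<in> B" for b using eigen[OF that] unfolding lam_def .
  define S where "S = (\<Sum>b\<in>B. sqrt (lam b) *\<^sub>R outer b b)"
  have S_eigen: "S *v b = sqrt (lam b) *\<^sub>R b" if "b \<in> B" for b
  proof -
    have "S *v b = (\<Sum>c\<in>B. (sqrt (lam c) * (c \<bullet> b)) *\<^sub>R c)"
      unfolding S_def using B
      by (simp add: sum_matrix_vector_mult scaleR_matrix_vector_assoc[symmetric] outer_matrix_vector)
    then show ?thesis using orthonormal_basis_sum_inner_scaleR[OF B that] by simp
  qed
  have SS_eigen: "(S ** S) *v b = lam b *\<^sub>R b" if "b \<in> B" for b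
    using that lam_nonneg[of b]
    by (simp add: matrix_vector_mul_assoc[symmetric] S_eigen matrix_vector_mult_scaleR)
  have "(S ** S) *v x = A *v x" for x
    using eigenbasis_matrix_vector[OF B SS_eigen, of x] eigenbasis_matrix_vector[OF B eigen', of x]
    by simp
  then have "S ** S = A" by (simp add: matrix_eq)
  moreover have "transpose S = S"
    unfolding S_def by (simp add: transpose_def vec_eq_iff sum_component outer_def mult.commute)
  moreover have "0 \<le> x \<bullet> (S *v x)" for x
    by (simp add: eigenbasis_quadratic_form[OF B S_eigen] lam_nonneg sum_nonneg)
  ultimately show ?thesis unfolding psd_mat_def by blast
qed

lemma transpose_diff: "transpose (A - B) = transpose A - transpose (B :: real^'n^'m)"
  by (simp add: vec_eq_iff transpose_def)

(* An eigenvector b of S1 - S2, with eigenvalue nu, satisfies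
   nu (b \<bullet> S1 b + b \<bullet> S2 b) = 0 because S1 (S1 - S2) + (S1 - S2) S2 = S1^2 - S2^2 = 0. *)
lemma psd_sqrt_unique:
  fixes S1 S2 :: "real^'n^'n"
  assumes S1: "psd_mat S1" and S2: "psd_mat S2" and square_eq: "S1 ** S1 = S2 ** S2"
  shows "S1 = S2"
proof -
  define X where "X = S1 - S2"
  have sym: "transpose X = X" using S1 S2 unfolding X_def psd_mat_def by (simp add: transpose_diff)
  obtain B where B: "orthonormal_basis B" and eigen: "\<And>b. b \<in> B \<Longrightarrow> X *v b = (b \<bullet> (X *v b)) *\<^sub>R b"
    using symmetric_matrix_orthonormal_eigenbasis[OF sym] by blast
  have X_kernel: "X *v b = 0" if b: "b \<in> B" for b
  proof -
    define \<nu> where "\<nu> = b \<bullet> (X *v b)"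
    have Xb: "X *v b = \<nu> *\<^sub>R b" using eigen b unfolding \<nu>_def by blast
    have X_mult: "X *v v = S1 *v v - S2 *v v" for v
      unfolding X_def by (simp add: matrix_vector_mult_diff_rdistrib)
    have "S1 *v (X *v b) + X *v (S2 *v b) = S1 *v (S1 *v b) - S2 *v (S2 *v b)"
      unfolding X_mult by (simp add: matrix_vector_mult_diff_distrib)
    also have "\<dots> = 0" using square_eq by (simp add: matrix_vector_mul_assoc)
    finally have "b \<bullet> (S1 *v (X *v b)) + (X *v b) \<bullet> (S2 *v b) = 0"
      using symmetric_matrix_inner_commute[OF sym, of b "S2 *v b"]
      by (metis inner_add_right inner_zero_right)
    then have "\<nu> * (b \<bullet> (S1 *v b) + b \<bullet> (S2 *v b)) = 0"
      unfolding Xb by (simp add: matrix_vector_mult_scaleR algebra_simps)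
    moreover have "0 \<le> b \<bullet> (S1 *v b)" "0 \<le> b \<bullet> (S2 *v b)"
      using S1 S2 unfolding psd_mat_def by blast+
    ultimately consider "\<nu> = 0" | "b \<bullet> (S1 *v b) = 0" "b \<bullet> (S2 *v b) = 0"
      by (metis add_nonneg_eq_0_iff mult_eq_0_iff)
    then show ?thesis
    proof cases
      case 2
      then have "S1 *v b = 0" "S2 *v b = 0" using psd_mat_kernel S1 S2 by blast+
      then show ?thesis using X_mult by simp
    qed (simp add: Xb)
  qed
  have "X *v x = 0" for x
    using eigenbasis_matrix_vector[OF B, of X "\<lambda>_. 0"] X_kernel by simp
  then show ?thesis unfolding X_def by (simp add: matrix_eq matrix_vector_mult_diff_rdistrib)
qed

lemma
  fixes A :: "real^'n^'n"
  assumes "psd_mat A"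
  shows psd_mat_psd_sqrt: "psd_mat (psd_sqrt A)"
    and psd_sqrt_square: "psd_sqrt A ** psd_sqrt A = A"
proof -
  have "\<exists>!S. psd_mat S \<and> S ** S = A"
    using psd_sqrt_exists[OF assms] psd_sqrt_unique by metis
  then have "psd_mat (psd_sqrt A) \<and> psd_sqrt A ** psd_sqrt A = A"
    unfolding psd_sqrt_def by (rule theI')
  then show "psd_mat (psd_sqrt A)" "psd_sqrt A ** psd_sqrt A = A" by simp_all
qed

lemma psd_sqrt_lower_bound:
  fixes S :: "real^'n^'n"
  assumes S: "psd_mat S" and square_ge: "loewner_ge (S ** S) (\<mu> *\<^sub>R mat 1)" and "\<mu> \<ge> 0"
  shows "sqrt \<mu> * (x \<bullet> x) \<le> x \<bullet> (S *v x)"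
proof -
  obtain B where B: "orthonormal_basis B" and eigen: "\<And>b. b \<in> B \<Longrightarrow> S *v b = (b \<bullet> (S *v b)) *\<^sub>R b"
    using symmetric_matrix_orthonormal_eigenbasis S unfolding psd_mat_def by blast
  define lam where "lam b = b \<bullet> (S *v b)" for b
  have eigen': "S *v b = lam b *\<^sub>R b" if "b \<in> B" for b using eigen[OF that] unfolding lam_def .
  have eigenvalue_ge: "sqrt \<mu> \<le> lam b" if b: "b \<in> B" for b
  proof -
    have "b \<bullet> b = 1" using B b unfolding orthonormal_basis_def by (simp add: power2_norm_eq_inner[symmetric])
    moreover have "0 \<le> b \<bullet> ((S ** S - \<mu> *\<^sub>R mat 1) *v b)"
      using square_ge unfolding loewner_ge_def psd_mat_def by blast
    ultimately have "\<mu> \<le> (lam b)\<^sup>2"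
      by (simp add: matrix_vector_mult_diff_rdistrib matrix_vector_mul_assoc[symmetric] eigen'[OF b]
          matrix_vector_mult_scaleR scaleR_matrix_vector_assoc[symmetric] inner_diff_right power2_eq_square)
    moreover have "0 \<le> lam b" using S unfolding lam_def psd_mat_def by blast
    ultimately show ?thesis by (simp add: real_le_lsqrt)
  qed
  have "sqrt \<mu> * (x \<bullet> x) = (\<Sum>b\<in>B. sqrt \<mu> * (b \<bullet> x)\<^sup>2)"
    by (simp add: orthonormal_basis_parseval[OF B] sum_distrib_left)
  also have "\<dots> \<le> (\<Sum>b\<in>B. lam b * (b \<bullet> x)\<^sup>2)"
    using eigenvalue_ge by (intro sum_mono mult_right_mono) auto
  also have "\<dots> = x \<bullet> (S *v x)" by (simp add: eigenbasis_quadratic_form[OF B eigen'])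
  finally show ?thesis .
qed

section \<open>The Frobenius inner product\<close>

lemma hs_norm_eq_norm: "hs_norm A = norm A"
  by (simp add: hs_norm_def norm_eq_sqrt_inner inner_vec_def power2_eq_square)

lemma norm_matrix_vector_le: "norm ((A :: real^'n^'m) *v x) \<le> norm A * norm x"
proof -
  have "(A *v x) $ i = A $ i \<bullet> x" for i
    by (simp add: matrix_vector_mult_def inner_vec_def)
  then have "(norm (A *v x))\<^sup>2 = (\<Sum>i\<in>UNIV. (A $ i \<bullet> x)\<^sup>2)"
    unfolding power2_norm_eq_inner by (simp add: inner_vec_def power2_eq_square)
  also have "\<dots> \<le> (\<Sum>i\<in>UNIV. (norm (A $ i))\<^sup>2 * (norm x)\<^sup>2)"
  proof (intro sum_mono)
    fix i
    have "\<bar>A $ i \<bullet> x\<bar>\<^sup>2 \<le> (norm (A $ i) * norm x)\<^sup>2"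
      by (intro power_mono Cauchy_Schwarz_ineq2) simp
    then show "(A $ i \<bullet> x)\<^sup>2 \<le> (norm (A $ i))\<^sup>2 * (norm x)\<^sup>2" by (simp add: power_mult_distrib)
  qed
  also have "\<dots> = (norm A * norm x)\<^sup>2"
    unfolding power_mult_distrib sum_distrib_right[symmetric] power2_norm_eq_inner[of A]
    by (simp add: inner_vec_def power2_norm_eq_inner)
  finally show ?thesis by (rule power2_le_imp_le) simp
qed

lemma abs_quadratic_form_diff_le:
  fixes A :: "real^'n^'n"
  shows "\<bar>x \<bullet> (A *v x) - y \<bullet> (A *v y)\<bar> \<le> norm A * norm (x - y) * (norm x + norm y)"
proof -
  have "x \<bullet> (A *v x) - y \<bullet> (A *v y) = (x - y) \<bullet> (A *v x) + y \<bullet> (A *v (x - y))"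
    by (simp add: inner_diff_left inner_diff_right matrix_vector_mult_diff_distrib)
  also have "\<bar>\<dots>\<bar> \<le> norm (x - y) * (norm A * norm x) + norm y * (norm A * norm (x - y))"
    by (intro abs_triangle_ineq[THEN order_trans] add_mono Cauchy_Schwarz_ineq2[THEN order_trans]
        mult_left_mono norm_matrix_vector_le norm_ge_zero)
  finally show ?thesis by (simp add: algebra_simps)
qed

lemma inner_transpose_transpose: "transpose A \<bullet> transpose B = (A :: real^'n^'m) \<bullet> B"
proof -
  have "transpose A \<bullet> transpose B = (\<Sum>i\<in>UNIV. \<Sum>j\<in>UNIV. A $ j $ i * B $ j $ i)"
    by (simp add: inner_vec_def transpose_def)
  also have "\<dots> = A \<bullet> B" by (subst sum.swap) (simp add: inner_vec_def)
  finally show ?thesis .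
qed

lemma inner_matrix_mult_lower_bound:
  fixes S M :: "real^'n^'n"
  assumes sym: "transpose S = S" and lower: "\<And>x. l * (x \<bullet> x) \<le> x \<bullet> (S *v x)"
  shows "l * (M \<bullet> M) \<le> M \<bullet> (M ** S)"
proof -
  have row: "(M ** S) $ i = S *v (M $ i)" for i
    using sym by (simp add: vec_eq_iff matrix_matrix_mult_def matrix_vector_mult_def transpose_def
        mult.commute)
  have "l * (M \<bullet> M) = (\<Sum>i\<in>UNIV. l * (M $ i \<bullet> M $ i))" by (simp add: inner_vec_def sum_distrib_left)
  also have "\<dots> \<le> (\<Sum>i\<in>UNIV. M $ i \<bullet> (S *v M $ i))" using lower by (intro sum_mono)
  also have "\<dots> = M \<bullet> (M ** S)" by (simp add: inner_vec_def row)
  finally show ?thesis .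
qed

lemma square_diff_inner_lower_bound:
  fixes S1 S2 :: "real^'n^'n"
  assumes sym1: "transpose S1 = S1" and sym2: "transpose S2 = S2"
    and lower1: "\<And>x. l1 * (x \<bullet> x) \<le> x \<bullet> (S1 *v x)"
    and lower2: "\<And>x. l2 * (x \<bullet> x) \<le> x \<bullet> (S2 *v x)"
  shows "(l1 + l2) * (norm (S1 - S2))\<^sup>2 \<le> (S1 - S2) \<bullet> (S1 ** S1 - S2 ** S2)"
proof -
  define X where "X = S1 - S2"
  have symX: "transpose X = X" unfolding X_def transpose_diff sym1 sym2 ..
  have "S1 ** S1 - S2 ** S2 = S1 ** X + X ** S2"
    unfolding X_def matrix_eq
    by (simp add: matrix_vector_mul_assoc[symmetric] matrix_vector_mult_diff_rdistrib
        matrix_vector_mult_add_rdistrib matrix_vector_mult_diff_distrib)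
  then have "X \<bullet> (S1 ** S1 - S2 ** S2) = X \<bullet> (S1 ** X) + X \<bullet> (X ** S2)"
    by (simp add: inner_add_right)
  moreover have "X \<bullet> (S1 ** X) = X \<bullet> (X ** S1)"
    using inner_transpose_transpose[of X "S1 ** X"] by (simp add: matrix_transpose_mul symX sym1)
  moreover have "l1 * (X \<bullet> X) \<le> X \<bullet> (X ** S1)" "l2 * (X \<bullet> X) \<le> X \<bullet> (X ** S2)"
    using inner_matrix_mult_lower_bound sym1 sym2 lower1 lower2 by blast+
  ultimately show ?thesis
    unfolding X_def[symmetric] power2_norm_eq_inner distrib_right by linarith
qed

section \<open>Integration\<close>

lemma integral_vec_nth:
  fixes f :: "'a \<Rightarrow> 'b::euclidean_space^'n"
  assumes "integrable M f"
  shows "(\<integral>x. f x \<partial>M) $ i = (\<integral>x. f x $ i \<partial>M)"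
  using integral_bounded_linear[OF bounded_linear_vec_nth assms] by simp

lemma integral_matrix_nth:
  fixes f :: "'a \<Rightarrow> real^'n^'m"
  assumes "integrable M f"
  shows "(\<integral>x. f x \<partial>M) $ i $ j = (\<integral>x. f x $ i $ j \<partial>M)"
  using assms by (simp add: integral_vec_nth integrable_bounded_linear[OF bounded_linear_vec_nth])

definition square_integrable :: "'a measure \<Rightarrow> ('a \<Rightarrow> real) \<Rightarrow> bool" where
  "square_integrable M f \<longleftrightarrow> f \<in> borel_measurable M \<and> integrable M (\<lambda>x. (f x)\<^sup>2)"

lemma integrable_scaleR_bounded:
  fixes f :: "'a \<Rightarrow> real" and g :: "'a \<Rightarrow> 'b::{banach, second_countable_topology}"
  assumes f: "integrable M f" and g: "g \<in> borel_measurable M" and bound: "AE x in M. norm (g x) \<le> C"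
  shows "integrable M (\<lambda>x. f x *\<^sub>R g x)"
proof (rule Bochner_Integration.integrable_bound)
  show "integrable M (\<lambda>x. C * f x)" using f by simp
  show "(\<lambda>x. f x *\<^sub>R g x) \<in> borel_measurable M" using f g by measurable
  show "AE x in M. norm (f x *\<^sub>R g x) \<le> norm (C * f x)"
    using bound
  proof eventually_elim
    case (elim x)
    have "\<bar>f x\<bar> * norm (g x) \<le> \<bar>f x\<bar> * \<bar>C\<bar>" using elim by (intro mult_left_mono) auto
    then show ?case by (simp add: abs_mult mult.commute)
  qed
qed

lemma square_integrable_mult_integrable:
  assumes f: "square_integrable M f" and g: "square_integrable M g"
  shows "integrable M (\<lambda>x. f x * g x)"
proof (rule Bochner_Integration.integrable_bound)
  show "integrable M (\<lambda>x. (f x)\<^sup>2 + (g x)\<^sup>2)" using f g unfolding square_integrable_def by simp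
  show "(\<lambda>x. f x * g x) \<in> borel_measurable M"
    using f g unfolding square_integrable_def by (intro borel_measurable_times) auto
  have "\<bar>f x * g x\<bar> \<le> (f x)\<^sup>2 + (g x)\<^sup>2" for x
  proof -
    have "2 * (\<bar>f x\<bar> * \<bar>g x\<bar>) \<le> (f x)\<^sup>2 + (g x)\<^sup>2"
      using zero_le_power2[of "\<bar>f x\<bar> - \<bar>g x\<bar>"] by (simp add: power2_eq_square algebra_simps)
    moreover have "0 \<le> \<bar>f x\<bar> * \<bar>g x\<bar>" by simp
    ultimately show ?thesis unfolding abs_mult by linarith
  qed
  then show "AE x in M. norm (f x * g x) \<le> norm ((f x)\<^sup>2 + (g x)\<^sup>2)" by simp
qed

lemma square_integrable_diff:
  assumes f: "square_integrable M f" and g: "square_integrable M g"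
  shows "square_integrable M (\<lambda>x. f x - g x)"
proof -
  have "integrable M (\<lambda>x. (f x)\<^sup>2 + (g x)\<^sup>2 - 2 * (f x * g x))"
    using f g square_integrable_mult_integrable[OF f g] unfolding square_integrable_def
    by (intro Bochner_Integration.integrable_diff Bochner_Integration.integrable_add
        integrable_mult_right) auto
  then show ?thesis using f g unfolding square_integrable_def by (auto simp: power2_diff mult.assoc)
qed

lemma square_integrable_mult_bounded:
  assumes f: "square_integrable M f" and g: "g \<in> borel_measurable M" and bound: "AE x in M. \<bar>g x\<bar> \<le> C"
  shows "square_integrable M (\<lambda>x. f x * g x)"
proof -
  have "AE x in M. norm ((g x)\<^sup>2) \<le> C\<^sup>2"
    using bound
  proof eventually_elim
    case (elim x)
    have "\<bar>g x\<bar>\<^sup>2 \<le> C\<^sup>2" by (rule power_mono) (use elim in auto)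
    then show ?case by simp
  qed
  then have "integrable M (\<lambda>x. (f x)\<^sup>2 *\<^sub>R (g x)\<^sup>2)"
    using f g unfolding square_integrable_def by (intro integrable_scaleR_bounded) auto
  then show ?thesis
    using f g unfolding square_integrable_def by (auto simp: power_mult_distrib intro: borel_measurable_times)
qed

lemma (in finite_measure) square_integrable_bounded:
  assumes "f \<in> borel_measurable M" and "AE x in M. \<bar>f x\<bar> \<le> C"
  shows "square_integrable M f"
  using square_integrable_mult_bounded[of M "\<lambda>_. 1" f C] assms
  by (simp add: square_integrable_def)

lemma (in finite_measure) square_integrable_integrable:
  "square_integrable M f \<Longrightarrow> integrable M f"
  unfolding square_integrable_def by (blast intro: square_integrable_imp_integrable)

lemma Cauchy_Schwarz_integral:
  assumes f: "square_integrable M f" and g: "square_integrable M g"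
  shows "(\<integral>x. \<bar>f x * g x\<bar> \<partial>M) \<le> sqrt (\<integral>x. (f x)\<^sup>2 \<partial>M) * sqrt (\<integral>x. (g x)\<^sup>2 \<partial>M)"
proof -
  define A B C where "A = (\<integral>x. (f x)\<^sup>2 \<partial>M)" and "B = (\<integral>x. (g x)\<^sup>2 \<partial>M)"
    and "C = (\<integral>x. \<bar>f x * g x\<bar> \<partial>M)"
  have fg: "integrable M (\<lambda>x. \<bar>f x * g x\<bar>)"
    using square_integrable_mult_integrable[OF f g] by (rule integrable_abs)
  have "0 \<le> A * t\<^sup>2 + (2 * C) * t + B" for t
  proof -
    have "0 \<le> (\<integral>x. (t * \<bar>f x\<bar> + \<bar>g x\<bar>)\<^sup>2 \<partial>M)" by simp
    also have "\<dots> = (\<integral>x. t\<^sup>2 * (f x)\<^sup>2 + 2 * t * \<bar>f x * g x\<bar> + (g x)\<^sup>2 \<partial>M)"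
      by (simp add: power2_eq_square abs_mult algebra_simps)
    also have "\<dots> = A * t\<^sup>2 + (2 * C) * t + B"
      using f g fg unfolding A_def B_def C_def square_integrable_def by (simp add: mult_ac)
    finally show ?thesis .
  qed
  from quadratic_nonneg_imp_discrim_le[OF this] have "C\<^sup>2 \<le> A * B" by simp
  then show ?thesis unfolding A_def B_def C_def by (simp add: real_le_rsqrt real_sqrt_mult[symmetric])
qed

lemma (in prob_space) square_integral_le_integral_square:
  fixes f :: "'a \<Rightarrow> real"
  assumes "integrable M f" "integrable M (\<lambda>x. (f x)\<^sup>2)"
  shows "(\<integral>x. f x \<partial>M)\<^sup>2 \<le> (\<integral>x. (f x)\<^sup>2 \<partial>M)"
  using variance_positive[of f] variance_eq[OF assms] by simp

lemma (in prob_space) integral_abs_le_sqrt_integral_square: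
  assumes "square_integrable M f"
  shows "(\<integral>x. \<bar>f x\<bar> \<partial>M) \<le> sqrt (\<integral>x. (f x)\<^sup>2 \<partial>M)"
proof -
  have "integrable M f" using assms by (rule square_integrable_integrable)
  then have "(\<integral>x. \<bar>f x\<bar> \<partial>M)\<^sup>2 \<le> (\<integral>x. \<bar>f x\<bar>\<^sup>2 \<partial>M)"
    using assms unfolding square_integrable_def by (intro square_integral_le_integral_square) auto
  then show ?thesis by (simp add: real_le_rsqrt)
qed

section \<open>Least squares with bounded design\<close>

locale bounded_design = prob_space \<rho> for \<rho> :: "((real^'n) \<times> real) measure" +
  fixes K :: real
  assumes sets_eq_borel: "sets \<rho> = sets borel"
    and integrable_response_square: "integrable \<rho> (\<lambda>z. (snd z)\<^sup>2)"
    and design_bounded: "AE z in \<rho>. (norm (fst z))\<^sup>2 \<le> K"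
begin

lemma borel_measurable_continuous: "continuous_on UNIV f \<Longrightarrow> f \<in> borel_measurable \<rho>"
  using measurable_cong_sets[OF sets_eq_borel refl] borel_measurable_continuous_onI by blast

lemma K_nonneg: "0 \<le> K"
proof -
  have "AE z in \<rho>. 0 \<le> K" using design_bounded by eventually_elim (rule order_trans[OF zero_le_power2])
  then show ?thesis by simp
qed

lemma AE_norm_design_le: "AE z in \<rho>. norm (fst z) \<le> sqrt K"
  using design_bounded by eventually_elim (simp add: real_le_rsqrt)

lemma AE_abs_inner_design_le: "AE z in \<rho>. \<bar>v \<bullet> fst z\<bar> \<le> norm v * sqrt K"
  using AE_norm_design_le
  by eventually_elim (metis Cauchy_Schwarz_ineq2 mult_left_mono norm_ge_zero order_trans)

lemma borel_measurable_inner_design: "(\<lambda>z. v \<bullet> fst z) \<in> borel_measurable \<rho>"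
  by (rule borel_measurable_continuous) (intro continuous_intros)

lemma square_integrable_inner_design: "square_integrable \<rho> (\<lambda>z. v \<bullet> fst z)"
  by (rule square_integrable_bounded[OF borel_measurable_inner_design AE_abs_inner_design_le])

lemma square_integrable_mult_inner_design:
  "square_integrable \<rho> f \<Longrightarrow> square_integrable \<rho> (\<lambda>z. f z * (v \<bullet> fst z))"
  by (rule square_integrable_mult_bounded[OF _ borel_measurable_inner_design AE_abs_inner_design_le])

lemma square_integrable_resid: "square_integrable \<rho> (resid \<theta>)"
proof -
  have "snd \<in> borel_measurable \<rho>" by (rule borel_measurable_continuous) (intro continuous_intros)
  then have "square_integrable \<rho> snd"
    using integrable_response_square unfolding square_integrable_def by simp
  then show ?thesis
    unfolding resid_def[abs_def] by (rule square_integrable_diff[OF square_integrable_inner_design])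
qed

lemma integrable_resid_square: "integrable \<rho> (\<lambda>z. (resid \<theta> z)\<^sup>2)"
  using square_integrable_resid unfolding square_integrable_def by blast

lemma integrable_scaleR_design:
  assumes "integrable \<rho> f"
  shows "integrable \<rho> (\<lambda>z. f z *\<^sub>R fst z)"
  by (rule integrable_scaleR_bounded[OF assms _ AE_norm_design_le])
    (rule borel_measurable_continuous, intro continuous_intros)

lemma integrable_scaleR_outer_design:
  "integrable \<rho> f \<Longrightarrow> integrable \<rho> (\<lambda>z. f z *\<^sub>R outer (fst z) (fst z))"
proof (rule integrable_scaleR_bounded)
  show "(\<lambda>z. outer (fst z) (fst z)) \<in> borel_measurable \<rho>"
    unfolding outer_def by (rule borel_measurable_continuous) (intro continuous_intros)
  show "AE z in \<rho>. norm (outer (fst z) (fst z)) \<le> K"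
    using design_bounded by eventually_elim (simp add: norm_outer power2_eq_square)
qed

definition resid_moment :: "real^'n \<Rightarrow> real^'n" where
  "resid_moment \<theta> = (\<integral>z. resid \<theta> z *\<^sub>R fst z \<partial>\<rho>)"

lemma integrable_resid_scaleR_design: "integrable \<rho> (\<lambda>z. resid \<theta> z *\<^sub>R fst z)"
  by (intro integrable_scaleR_design square_integrable_integrable square_integrable_resid)

lemma noise_cov_eq:
  "noise_cov \<rho> \<theta> = (\<integral>z. (resid \<theta> z)\<^sup>2 *\<^sub>R outer (fst z) (fst z) \<partial>\<rho>)
                     - outer (resid_moment \<theta>) (resid_moment \<theta>)"
proof -
  have F: "integrable \<rho> (\<lambda>z. (resid \<theta> z)\<^sup>2 *\<^sub>R outer (fst z) (fst z))"
    by (rule integrable_scaleR_outer_design[OF integrable_resid_square])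
  have "noise_cov \<rho> \<theta> $ i $ j
      = ((\<integral>z. (resid \<theta> z)\<^sup>2 *\<^sub>R outer (fst z) (fst z) \<partial>\<rho>)
          - outer (resid_moment \<theta>) (resid_moment \<theta>)) $ i $ j" for i j
    unfolding vector_minus_component integral_matrix_nth[OF F]
    by (simp add: noise_cov_def outer_def resid_moment_def integral_vec_nth[OF integrable_resid_scaleR_design]
        mult_ac)
  then show ?thesis by (simp add: vec_eq_iff)
qed

lemma second_moment_eq: "second_moment \<rho> = (\<integral>z. outer (fst z) (fst z) \<partial>\<rho>)"
proof -
  have F: "integrable \<rho> (\<lambda>z. outer (fst z) (fst z))"
    using integrable_scaleR_outer_design[of "\<lambda>_. 1"] by simp
  show ?thesis by (simp add: vec_eq_iff second_moment_def integral_matrix_nth[OF F]) (simp add: outer_def)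
qed

lemma inner_resid_moment: "x \<bullet> resid_moment \<theta> = (\<integral>z. resid \<theta> z * (x \<bullet> fst z) \<partial>\<rho>)"
  unfolding resid_moment_def using integrable_resid_scaleR_design
  by (simp add: integral_inner_right[symmetric])

lemma inner_noise_cov:
  "W \<bullet> noise_cov \<rho> \<theta> = (\<integral>z. (resid \<theta> z)\<^sup>2 * (fst z \<bullet> (W *v fst z)) \<partial>\<rho>)
                           - resid_moment \<theta> \<bullet> (W *v resid_moment \<theta>)"
  unfolding noise_cov_eq inner_diff_right
  using integrable_scaleR_outer_design[OF integrable_resid_square, of \<theta>]
  by (simp add: integral_inner_right[symmetric] inner_outer)

lemma psd_noise_cov: "psd_mat (noise_cov \<rho> \<theta>)"
  unfolding psd_mat_def
proof (intro conjI allI)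
  show "transpose (noise_cov \<rho> \<theta>) = noise_cov \<rho> \<theta>"
    by (simp add: vec_eq_iff transpose_def noise_cov_def mult_ac)
  fix x :: "real^'n"
  define g where "g z = resid \<theta> z * (x \<bullet> fst z)" for z
  have g: "square_integrable \<rho> g"
    unfolding g_def by (rule square_integrable_mult_inner_design[OF square_integrable_resid])
  have "x \<bullet> (noise_cov \<rho> \<theta> *v x) = outer x x \<bullet> noise_cov \<rho> \<theta>"
    using inner_outer[of "noise_cov \<rho> \<theta>" x x] by (simp add: inner_commute)
  also have "\<dots> = (\<integral>z. (g z)\<^sup>2 \<partial>\<rho>) - (\<integral>z. g z \<partial>\<rho>)\<^sup>2"
    unfolding inner_noise_cov g_def inner_resid_moment[symmetric]
    by (simp add: outer_matrix_vector power2_eq_square inner_commute mult_ac)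
  finally have quadratic_form: "x \<bullet> (noise_cov \<rho> \<theta> *v x) = (\<integral>z. (g z)\<^sup>2 \<partial>\<rho>) - (\<integral>z. g z \<partial>\<rho>)\<^sup>2" .
  have "integrable \<rho> (\<lambda>z. (g z)\<^sup>2)" using g unfolding square_integrable_def by blast
  then have "(\<integral>z. g z \<partial>\<rho>)\<^sup>2 \<le> (\<integral>z. (g z)\<^sup>2 \<partial>\<rho>)"
    by (rule square_integral_le_integral_square[OF square_integrable_integrable[OF g]])
  with quadratic_form show "0 \<le> x \<bullet> (noise_cov \<rho> \<theta> *v x)" by linarith
qed

lemma resid_moment_diff:
  "resid_moment \<theta> - resid_moment \<eta> = (\<integral>z. ((\<theta> - \<eta>) \<bullet> fst z) *\<^sub>R fst z \<partial>\<rho>)"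
  unfolding resid_moment_def
  using Bochner_Integration.integral_diff[OF integrable_resid_scaleR_design integrable_resid_scaleR_design,
      of \<theta> \<eta>, symmetric]
  by (simp add: resid_def inner_diff_left scaleR_left_diff_distrib)

lemma norm_integral_scaleR_design_le:
  assumes f: "square_integrable \<rho> f"
  shows "norm (\<integral>z. f z *\<^sub>R fst z \<partial>\<rho>) \<le> sqrt K * sqrt (\<integral>z. (f z)\<^sup>2 \<partial>\<rho>)"
proof -
  have "integrable \<rho> f" using f by (rule square_integrable_integrable)
  have "norm (\<integral>z. f z *\<^sub>R fst z \<partial>\<rho>) \<le> (\<integral>z. norm (f z *\<^sub>R fst z) \<partial>\<rho>)"
    by (rule integral_norm_bound)
  also have "\<dots> \<le> (\<integral>z. sqrt K * \<bar>f z\<bar> \<partial>\<rho>)"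
  proof (rule integral_mono_AE)
    show "integrable \<rho> (\<lambda>z. norm (f z *\<^sub>R fst z))"
      by (rule integrable_norm[OF integrable_scaleR_design[OF \<open>integrable \<rho> f\<close>]])
    show "integrable \<rho> (\<lambda>z. sqrt K * \<bar>f z\<bar>)" using \<open>integrable \<rho> f\<close> by simp
    show "AE z in \<rho>. norm (f z *\<^sub>R fst z) \<le> sqrt K * \<bar>f z\<bar>"
      using AE_norm_design_le by eventually_elim (simp add: mult.commute[of "sqrt K"] mult_left_mono)
  qed
  also have "\<dots> \<le> sqrt K * sqrt (\<integral>z. (f z)\<^sup>2 \<partial>\<rho>)"
    using integral_abs_le_sqrt_integral_square[OF f] by (simp add: mult_left_mono K_nonneg)
  finally show ?thesis .
qed

lemma second_moment_quadratic_form: "(second_moment \<rho> *v v) \<bullet> v = (\<integral>z. (v \<bullet> fst z)\<^sup>2 \<partial>\<rho>)"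
proof -
  have "integrable \<rho> (\<lambda>z. outer (fst z) (fst z))"
    using integrable_scaleR_outer_design[of "\<lambda>_. 1"] by simp
  moreover have "(second_moment \<rho> *v v) \<bullet> v = (\<integral>z. outer (fst z) (fst z) \<partial>\<rho>) \<bullet> outer v v"
    using inner_outer[of "second_moment \<rho>" v v] by (simp add: second_moment_eq inner_commute)
  ultimately have "(second_moment \<rho> *v v) \<bullet> v = (\<integral>z. outer (fst z) (fst z) \<bullet> outer v v \<partial>\<rho>)"
    by simp
  then show ?thesis by (simp add: inner_outer outer_matrix_vector power2_eq_square inner_commute)
qed

lemma integral_resid_square_weighted_diff_le:
  assumes g: "g \<in> borel_measurable \<rho>" and bound: "AE z in \<rho>. \<bar>g z\<bar> \<le> C"
  shows "(\<integral>z. (resid \<theta> z)\<^sup>2 * g z \<partial>\<rho>) - (\<integral>z. (resid \<eta> z)\<^sup>2 * g z \<partial>\<rho>)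
    \<le> C * sqrt (\<integral>z. ((\<theta> - \<eta>) \<bullet> fst z)\<^sup>2 \<partial>\<rho>)
          * (sqrt (\<integral>z. (resid \<theta> z)\<^sup>2 \<partial>\<rho>) + sqrt (\<integral>z. (resid \<eta> z)\<^sup>2 \<partial>\<rho>))"
proof -
  define u :: "(real^'n) \<times> real \<Rightarrow> real" where "u z = (\<theta> - \<eta>) \<bullet> fst z" for z
  have u: "square_integrable \<rho> u" unfolding u_def by (rule square_integrable_inner_design)
  have "AE z in \<rho>. 0 \<le> C" using bound by eventually_elim auto
  then have "0 \<le> C" by simp
  have weighted: "integrable \<rho> (\<lambda>z. (resid t z)\<^sup>2 * g z)" for t
    using integrable_scaleR_bounded[OF integrable_resid_square g, of C] bound by simp
  have cross: "integrable \<rho> (\<lambda>z. \<bar>u z * resid t z\<bar>)" for t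
    by (intro integrable_abs square_integrable_mult_integrable[OF u square_integrable_resid])
  have "(\<integral>z. (resid \<theta> z)\<^sup>2 * g z \<partial>\<rho>) - (\<integral>z. (resid \<eta> z)\<^sup>2 * g z \<partial>\<rho>)
      = (\<integral>z. (resid \<theta> z)\<^sup>2 * g z - (resid \<eta> z)\<^sup>2 * g z \<partial>\<rho>)"
    by (rule Bochner_Integration.integral_diff[symmetric, OF weighted weighted])
  also have "\<dots> \<le> (\<integral>z. C * (\<bar>u z * resid \<theta> z\<bar> + \<bar>u z * resid \<eta> z\<bar>) \<partial>\<rho>)"
  proof (rule integral_mono_AE)
    show "integrable \<rho> (\<lambda>z. (resid \<theta> z)\<^sup>2 * g z - (resid \<eta> z)\<^sup>2 * g z)" using weighted by simp
    show "integrable \<rho> (\<lambda>z. C * (\<bar>u z * resid \<theta> z\<bar> + \<bar>u z * resid \<eta> z\<bar>))" using cross by simp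
    show "AE z in \<rho>. (resid \<theta> z)\<^sup>2 * g z - (resid \<eta> z)\<^sup>2 * g z
        \<le> C * (\<bar>u z * resid \<theta> z\<bar> + \<bar>u z * resid \<eta> z\<bar>)"
      using bound
    proof eventually_elim
      case (elim z)
      have "(resid \<theta> z)\<^sup>2 - (resid \<eta> z)\<^sup>2 = u z * resid \<theta> z + u z * resid \<eta> z"
        by (simp add: resid_def u_def inner_diff_left power2_eq_square algebra_simps)
      then have "(resid \<theta> z)\<^sup>2 * g z - (resid \<eta> z)\<^sup>2 * g z
          \<le> \<bar>u z * resid \<theta> z + u z * resid \<eta> z\<bar> * \<bar>g z\<bar>"
        by (metis abs_ge_self abs_mult left_diff_distrib)
      also have "\<dots> \<le> (\<bar>u z * resid \<theta> z\<bar> + \<bar>u z * resid \<eta> z\<bar>) * C"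
        using elim by (intro mult_mono abs_triangle_ineq) auto
      finally show ?case by (simp add: mult.commute)
    qed
  qed
  also have "\<dots> = C * ((\<integral>z. \<bar>u z * resid \<theta> z\<bar> \<partial>\<rho>) + (\<integral>z. \<bar>u z * resid \<eta> z\<bar> \<partial>\<rho>))"
    using cross by simp
  also have "\<dots> \<le> C * (sqrt (\<integral>z. (u z)\<^sup>2 \<partial>\<rho>) * sqrt (\<integral>z. (resid \<theta> z)\<^sup>2 \<partial>\<rho>)
                     + sqrt (\<integral>z. (u z)\<^sup>2 \<partial>\<rho>) * sqrt (\<integral>z. (resid \<eta> z)\<^sup>2 \<partial>\<rho>))"
    using \<open>0 \<le> C\<close>
    by (intro mult_left_mono add_mono Cauchy_Schwarz_integral[OF u square_integrable_resid])
  finally show ?thesis unfolding u_def by (simp add: algebra_simps)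
qed

lemma resid_moment_quadratic_form_diff_le:
  "\<bar>resid_moment \<theta> \<bullet> (W *v resid_moment \<theta>) - resid_moment \<eta> \<bullet> (W *v resid_moment \<eta>)\<bar>
    \<le> K * norm W * sqrt (\<integral>z. ((\<theta> - \<eta>) \<bullet> fst z)\<^sup>2 \<partial>\<rho>)
          * (sqrt (\<integral>z. (resid \<theta> z)\<^sup>2 \<partial>\<rho>) + sqrt (\<integral>z. (resid \<eta> z)\<^sup>2 \<partial>\<rho>))"
  (is "_ \<le> K * norm W * ?q * (?e \<theta> + ?e \<eta>)")
proof -
  have diff: "norm (resid_moment \<theta> - resid_moment \<eta>) \<le> sqrt K * ?q"
    unfolding resid_moment_diff by (rule norm_integral_scaleR_design_le[OF square_integrable_inner_design])
  have moment: "norm (resid_moment t) \<le> sqrt K * ?e t" for t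
    unfolding resid_moment_def by (rule norm_integral_scaleR_design_le[OF square_integrable_resid])
  have "\<bar>resid_moment \<theta> \<bullet> (W *v resid_moment \<theta>) - resid_moment \<eta> \<bullet> (W *v resid_moment \<eta>)\<bar>
      \<le> norm W * norm (resid_moment \<theta> - resid_moment \<eta>) * (norm (resid_moment \<theta>) + norm (resid_moment \<eta>))"
    by (rule abs_quadratic_form_diff_le)
  also have "\<dots> \<le> norm W * (sqrt K * ?q) * (sqrt K * ?e \<theta> + sqrt K * ?e \<eta>)"
    using diff moment K_nonneg by (intro mult_mono add_mono mult_left_mono) auto
  also have "\<dots> = (sqrt K * sqrt K) * (norm W * ?q * (?e \<theta> + ?e \<eta>))"
    by (simp add: algebra_simps del: real_sqrt_mult_self)
  finally show ?thesis using K_nonneg by (simp add: mult.assoc)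
qed

lemma inner_noise_cov_diff_le:
  "W \<bullet> (noise_cov \<rho> \<theta> - noise_cov \<rho> \<eta>)
    \<le> 2 * K * norm W * sqrt (\<integral>z. ((\<theta> - \<eta>) \<bullet> fst z)\<^sup>2 \<partial>\<rho>)
          * (sqrt (\<integral>z. (resid \<theta> z)\<^sup>2 \<partial>\<rho>) + sqrt (\<integral>z. (resid \<eta> z)\<^sup>2 \<partial>\<rho>))"
  (is "_ \<le> 2 * K * norm W * ?q * ?s")
proof -
  have "bounded_linear (\<lambda>z :: (real^'n) \<times> real. W *v fst z)"
    by (rule bounded_linear_compose[OF matrix_vector_mul_bounded_linear bounded_linear_fst])
  then have "(\<lambda>z. fst z \<bullet> (W *v fst z)) \<in> borel_measurable \<rho>"
    by (intro borel_measurable_continuous continuous_on_inner continuous_on_fst continuous_on_id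
        linear_continuous_on)
  moreover have "AE z in \<rho>. \<bar>fst z \<bullet> (W *v fst z)\<bar> \<le> K * norm W"
    using design_bounded
  proof eventually_elim
    case (elim z)
    have "\<bar>fst z \<bullet> (W *v fst z)\<bar> \<le> norm W * (norm (fst z))\<^sup>2"
      using abs_quadratic_form_diff_le[of "fst z" W 0] by (simp add: power2_eq_square mult.assoc)
    also have "\<dots> \<le> norm W * K" using elim by (intro mult_left_mono) auto
    finally show ?case by (simp add: mult.commute)
  qed
  ultimately have "(\<integral>z. (resid \<theta> z)\<^sup>2 * (fst z \<bullet> (W *v fst z)) \<partial>\<rho>)
      - (\<integral>z. (resid \<eta> z)\<^sup>2 * (fst z \<bullet> (W *v fst z)) \<partial>\<rho>) \<le> K * norm W * ?q * ?s"
    by (rule integral_resid_square_weighted_diff_le)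
  moreover have "2 * K * norm W * ?q * ?s = K * norm W * ?q * ?s + K * norm W * ?q * ?s" by simp
  ultimately show ?thesis
    using resid_moment_quadratic_form_diff_le[of \<theta> W \<eta>]
    unfolding inner_diff_right inner_noise_cov by linarith
qed

lemma norm_sigma_mat_diff_le:
  assumes a: "a > 0"
    and lower: "\<And>\<theta>. loewner_ge (sigma_mat \<rho> \<theta> ** sigma_mat \<rho> \<theta>) ((a\<^sup>2 * risk \<rho> \<theta>) *\<^sub>R mat 1)"
    and risk_pos: "\<And>\<theta>. 0 < risk \<rho> \<theta>"
  shows "a * norm (sigma_mat \<rho> \<theta> - sigma_mat \<rho> \<eta>)
           \<le> 2 * K * sqrt (2 * ((second_moment \<rho> *v (\<theta> - \<eta>)) \<bullet> (\<theta> - \<eta>)))"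
proof -
  define S where "S t = sigma_mat \<rho> t" for t
  define w where "w = norm (S \<theta> - S \<eta>)"
  define q where "q = sqrt (\<integral>z. ((\<theta> - \<eta>) \<bullet> fst z)\<^sup>2 \<partial>\<rho>)"
  define s where "s = sqrt (risk \<rho> \<theta>) + sqrt (risk \<rho> \<eta>)"
  have S_psd: "psd_mat (S t)" and S_square: "S t ** S t = noise_cov \<rho> t" for t
    unfolding S_def sigma_mat_def using psd_noise_cov by (auto intro: psd_mat_psd_sqrt psd_sqrt_square)
  have S_sym: "transpose (S t) = S t" for t using S_psd unfolding psd_mat_def by blast
  have S_lower: "(a * sqrt (risk \<rho> t)) * (x \<bullet> x) \<le> x \<bullet> (S t *v x)" for t x
  proof -
    have "sqrt (a\<^sup>2 * risk \<rho> t) * (x \<bullet> x) \<le> x \<bullet> (S t *v x)"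
      using S_psd lower[of t] risk_pos[of t] unfolding S_def by (intro psd_sqrt_lower_bound) auto
    then show ?thesis using a by (simp add: real_sqrt_mult)
  qed
  have resid_norm: "sqrt (\<integral>z. (resid t z)\<^sup>2 \<partial>\<rho>) = sqrt 2 * sqrt (risk \<rho> t)" for t
    unfolding risk_def by (simp add: real_sqrt_mult[symmetric])
  have "s * (a * w\<^sup>2) = (a * sqrt (risk \<rho> \<theta>) + a * sqrt (risk \<rho> \<eta>)) * (norm (S \<theta> - S \<eta>))\<^sup>2"
    unfolding s_def w_def by (simp add: algebra_simps)
  also have "\<dots> \<le> (S \<theta> - S \<eta>) \<bullet> (noise_cov \<rho> \<theta> - noise_cov \<rho> \<eta>)"
    using square_diff_inner_lower_bound[OF S_sym S_sym S_lower S_lower] unfolding S_square .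
  also have "\<dots> \<le> s * (2 * sqrt 2 * K * q * w)"
    using inner_noise_cov_diff_le[of "S \<theta> - S \<eta>" \<theta> \<eta>]
    unfolding resid_norm s_def q_def w_def by (simp add: algebra_simps)
  finally have "a * w\<^sup>2 \<le> 2 * sqrt 2 * K * q * w"
    using risk_pos unfolding s_def by (simp add: add_pos_pos)
  then have "a * w \<le> 2 * sqrt 2 * K * q"
    using K_nonneg by (cases "w = 0") (auto simp: q_def w_def power2_eq_square)
  then show ?thesis
    unfolding w_def S_def q_def second_moment_quadratic_form by (simp add: real_sqrt_mult mult_ac)
qed

lemma norm_sigma_mat_diff_square_le:
  assumes a: "a > 0"
    and lower: "\<And>\<theta>. loewner_ge (sigma_mat \<rho> \<theta> ** sigma_mat \<rho> \<theta>) ((a\<^sup>2 * risk \<rho> \<theta>) *\<^sub>R mat 1)"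
    and risk_pos: "\<And>\<theta>. 0 < risk \<rho> \<theta>"
  shows "(norm (sigma_mat \<rho> \<theta> - sigma_mat \<rho> \<eta>))\<^sup>2
           \<le> 8 * K\<^sup>2 / a\<^sup>2 * ((second_moment \<rho> *v (\<theta> - \<eta>)) \<bullet> (\<theta> - \<eta>))"
proof -
  define q where "q = (second_moment \<rho> *v (\<theta> - \<eta>)) \<bullet> (\<theta> - \<eta>)"
  have "0 \<le> q" unfolding q_def second_moment_quadratic_form by simp
  have "(a * norm (sigma_mat \<rho> \<theta> - sigma_mat \<rho> \<eta>))\<^sup>2 \<le> (2 * K * sqrt (2 * q))\<^sup>2"
    using norm_sigma_mat_diff_le[OF assms] a unfolding q_def by (intro power_mono) auto
  then have "a\<^sup>2 * (norm (sigma_mat \<rho> \<theta> - sigma_mat \<rho> \<eta>))\<^sup>2 \<le> 8 * K\<^sup>2 * q"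
    using \<open>0 \<le> q\<close> by (simp add: power_mult_distrib)
  then show ?thesis using a unfolding q_def[symmetric] by (simp add: field_simps)
qed

end

theorem lemma5p3:
  fixes \<rho> :: "((real^'n) \<times> real) measure" and K a :: real
  assumes "prob_space \<rho>"
    and "sets \<rho> = sets borel"
    and "integrable \<rho> (\<lambda>z. (snd z)\<^sup>2)"
    and "AE z in \<rho>. (norm (fst z))\<^sup>2 \<le> K"
    and "a > 0"
    and "\<forall>\<theta>. loewner_ge (sigma_mat \<rho> \<theta> ** sigma_mat \<rho> \<theta>)
                         ((a\<^sup>2 * risk \<rho> \<theta>) *\<^sub>R mat 1)"
    and "\<forall>\<theta>. risk \<rho> \<theta> \<ge> a\<^sup>2"
  shows "\<exists>c>0. \<forall>\<theta> \<eta>.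
           (hs_norm (sigma_mat \<rho> \<theta> - sigma_mat \<rho> \<eta>))\<^sup>2
             \<le> 2 * c * K * ((second_moment \<rho> *v (\<theta> - \<eta>)) \<bullet> (\<theta> - \<eta>))"
proof -
  interpret bounded_design \<rho> K
    using assms(1-4) by (simp add: bounded_design_def bounded_design_axioms_def)
  have risk_pos: "risk \<rho> \<theta> > 0" for \<theta> using assms(5,7) by (meson less_le_trans zero_less_power)
  define c where "c = (if K > 0 then 4 * K / a\<^sup>2 else 1)"
  have "c > 0" using \<open>a > 0\<close> unfolding c_def by simp
  moreover have "8 * K\<^sup>2 / a\<^sup>2 = 2 * c * K"
    using K_nonneg unfolding c_def by (auto simp: power2_eq_square)
  ultimately show ?thesis
    using norm_sigma_mat_diff_square_le[OF \<open>a > 0\<close> _ risk_pos] assms(6)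
    unfolding hs_norm_eq_norm by auto
qed

end
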